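(* Let $(X,d)$ be a metric space such that $d(v,v')<\pi/2$ for all $v,v'\in X$, let $T\colon X\to X$ be a vicinal mapping, let $p\in X$, and let $\{x_n\}$ be a sequence in $X$ such that $\mathrm{AC}(\{x_n\})=\{p\}$ and $d(Tx_n,x_n)\to 0$. Then $Tp=p$.
   Context: The asymptotic center of $\{x_n\}$ is $\mathrm{AC}(\{x_n\})=\{z\in X:\limsup_n d(x_n,z)=\inf_{y\in X}\limsup_n d(x_n,y)\}$. With $C_z=\cos d(Tz,z)$, $T$ is vicinal if for all $x,y\in X$: $\bigl(C_x^2(1+C_y^2)+C_y^2(1+C_x^2)\bigr)\cos d(Tx,Ty)\ge C_x^2(1+C_y^2)\cos d(Tx,y)+C_y^2(1+C_x^2)\cos d(Ty,x)$. *)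

theory Defs
  imports "HOL-Analysis.Analysis"
begin

(* The metric space X is the whole type 'a (class metric_space), d = dist. *)

definition asymptotic_radius_at :: "(nat \<Rightarrow> 'a::metric_space) \<Rightarrow> 'a \<Rightarrow> ereal" where
  "asymptotic_radius_at x z = limsup (\<lambda>n. ereal (dist (x n) z))"

definition asymptotic_center :: "(nat \<Rightarrow> 'a::metric_space) \<Rightarrow> 'a set" where
  "asymptotic_center x =
     {z. asymptotic_radius_at x z = (INF y. asymptotic_radius_at x y)}"

definition vicinal :: "('a::metric_space \<Rightarrow> 'a) \<Rightarrow> bool" where
  "vicinal T \<longleftrightarrow> (\<forall>x y.
     let Cx = cos (dist (T x) x); Cy = cos (dist (T y) y) in
     (Cx^2 * (1 + Cy^2) + Cy^2 * (1 + Cx^2)) * cos (dist (T x) (T y))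
       \<ge> Cx^2 * (1 + Cy^2) * cos (dist (T x) y) + Cy^2 * (1 + Cx^2) * cos (dist (T y) x))"

end

theory Submission
  imports Defs
begin

text \<open>
  Write \<open>e\<^sub>n = d(Tx\<^sub>n, x\<^sub>n)\<close>. Applying the vicinal inequality to the pair \<open>p, x\<^sub>n\<close>
  and moving \<open>Tx\<^sub>n\<close> to \<open>x\<^sub>n\<close> at a cost of \<open>e\<^sub>n\<close> (cosine is 1-Lipschitz) gives
  \<open>cos d(x\<^sub>n, Tp) \<ge> cos d(x\<^sub>n, p) - 10 e\<^sub>n\<close> once \<open>cos e\<^sub>n \<ge> 1/2\<close>, because the weight of
  the \<open>x\<^sub>n\<close>-term is then at least \<open>1/4\<close> and the other weight at most \<open>2\<close>. The diameter
  bound keeps all distances in \<open>[0, \<pi>]\<close>, where cosine is decreasing, so with \<open>e\<^sub>n \<rightarrow> 0\<close>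
  the asymptotic radius at \<open>Tp\<close> is at most that at \<open>p\<close>: \<open>Tp\<close> is an asymptotic center
  and hence equals \<open>p\<close>.
\<close>

lemma abs_cos_diff_le: "\<bar>cos (a::real) - cos b\<bar> \<le> \<bar>a - b\<bar>"
proof -
  have "\<bar>cos a - cos b\<bar> = 2 * \<bar>sin ((a + b) / 2)\<bar> * \<bar>sin ((b - a) / 2)\<bar>"
    by (simp add: cos_diff_cos abs_mult)
  also have "\<dots> \<le> 2 * 1 * \<bar>(b - a) / 2\<bar>"
    by (intro mult_mono abs_sin_x_le_abs_x) auto
  finally show ?thesis by simp
qed

lemma abs_cos_dist_diff_le: "\<bar>cos (dist a c) - cos (dist b c)\<bar> \<le> dist a b"
  using abs_cos_diff_le[of "dist a c" "dist b c"] abs_dist_diff_le[of a c b]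
  by (simp add: dist_commute)

lemma weighted_ineq_perturb:
  fixes A B D E a b e :: real
  assumes "A * a + B * E \<le> (A + B) * D" "D \<le> a + e" "b - e \<le> E"
    and "0 \<le> A" "A \<le> 2" "1/4 \<le> B" "0 \<le> e"
  shows "b - 10 * e \<le> a"
proof -
  have "(A + B) * D \<le> (A + B) * (a + e)" "B * (b - e) \<le> B * E"
    using assms by (intro mult_left_mono; auto)+
  then have "0 \<le> B * (a - b) + (A + 2 * B) * e"
    using assms(1) by (simp add: algebra_simps)
  moreover have "(A + 2 * B) * e \<le> 10 * B * e"
    using assms by (intro mult_right_mono) auto
  ultimately have "0 \<le> B * (a - b + 10 * e)" by (simp add: algebra_simps)
  then show ?thesis using assms(6) by (simp add: zero_le_mult_iff)
qed

lemma vicinal_cos_dist_ge: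
  fixes T :: "'a::metric_space \<Rightarrow> 'a"
  assumes "vicinal T" and c_ge: "1/2 \<le> cos (dist (T y) y)"
  shows "cos (dist y p) - 10 * dist (T y) y \<le> cos (dist y (T p))"
proof -
  define Cp where "Cp = cos (dist (T p) p)"
  define c where "c = cos (dist (T y) y)"
  have V: "Cp\<^sup>2 * (1 + c\<^sup>2) * cos (dist (T p) y) + c\<^sup>2 * (1 + Cp\<^sup>2) * cos (dist (T y) p)
      \<le> (Cp\<^sup>2 * (1 + c\<^sup>2) + c\<^sup>2 * (1 + Cp\<^sup>2)) * cos (dist (T p) (T y))"
    using \<open>vicinal T\<close> unfolding vicinal_def Let_def Cp_def c_def by blast
  have D: "cos (dist (T p) (T y)) \<le> cos (dist (T p) y) + dist (T y) y"
    using abs_cos_dist_diff_le[of "T y" "T p" y] by (simp add: dist_commute)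
  have E: "cos (dist y p) - dist (T y) y \<le> cos (dist (T y) p)"
    using abs_cos_dist_diff_le[of "T y" p y] by simp
  have "Cp\<^sup>2 \<le> 1"
    by (simp add: Cp_def abs_square_le_1)
  moreover have "c\<^sup>2 \<le> 1" "(1/2)\<^sup>2 \<le> c\<^sup>2"
    using c_ge by (auto simp: c_def abs_square_le_1 intro: power_mono)
  ultimately have "Cp\<^sup>2 * (1 + c\<^sup>2) \<le> 2" "1/4 \<le> c\<^sup>2 * (1 + Cp\<^sup>2)"
    using mult_mono[of "Cp\<^sup>2" 1 "1 + c\<^sup>2" 2] mult_left_mono[of 1 "1 + Cp\<^sup>2" "c\<^sup>2"]
    by (auto simp: power2_eq_square)
  with V D E show ?thesis
    by (auto intro!: weighted_ineq_perturb simp: dist_commute)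
qed

lemma limsup_le_limsup_if_cos_ge:
  fixes f g h :: "nat \<Rightarrow> real"
  assumes f: "\<And>n. f n \<in> {0..pi}" and g: "\<And>n. 0 \<le> g n" and h: "h \<longlonglongrightarrow> 0"
    and ev: "eventually (\<lambda>n. cos (g n) - h n \<le> cos (f n)) sequentially"
  shows "limsup (\<lambda>n. ereal (f n)) \<le> limsup (\<lambda>n. ereal (g n))"
  unfolding Limsup_le_iff
proof (intro allI impI)
  fix y assume y: "limsup (\<lambda>n. ereal (g n)) < y"
  show "eventually (\<lambda>n. ereal (f n) < y) sequentially"
  proof (cases "y \<le> ereal pi")
    case False
    then show ?thesis
      using f by (intro always_eventually allI) (meson atLeastAtMost_iff ereal_less_eq(3) le_less_trans not_le)
  next
    case True
    obtain z where z: "limsup (\<lambda>n. ereal (g n)) < z" "z < y"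
      using y dense by blast
    then obtain l r where lr: "z = ereal l" "y = ereal r"
      using True by (cases z; cases y) auto
    have g_lt: "eventually (\<lambda>n. g n < l) sequentially"
      using Limsup_lessD[OF z(1)] lr by simp
    then have "0 < l"
      using g by (metis eventually_sequentially le_less_trans nle_le)
    moreover have "l < r" "r \<le> pi" using z True lr by auto
    ultimately have "cos r < cos l"
      by (simp add: cos_mono_less_eq)
    then have "eventually (\<lambda>n. h n < cos l - cos r) sequentially"
      using h by (intro order_tendstoD) auto
    with g_lt ev show ?thesis
    proof eventually_elim
      case (elim n)
      have "cos l < cos (g n)"
        using elim(1) g[of n] \<open>l < r\<close> \<open>r \<le> pi\<close> by (simp add: cos_mono_less_eq)
      then have "cos r < cos (f n)" using elim by linarith
      then show ?case
        using f[of n] \<open>0 < l\<close> \<open>l < r\<close> \<open>r \<le> pi\<close> lr by (simp add: cos_mono_less_eq)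
    qed
  qed
qed

lemma asymptotic_center_singletonD:
  assumes "asymptotic_center x = {p}" "asymptotic_radius_at x q \<le> asymptotic_radius_at x p"
  shows "q = p"
proof -
  have "asymptotic_radius_at x q = (INF y. asymptotic_radius_at x y)"
    using assms unfolding asymptotic_center_def
    by (intro order_antisym INF_lower) (auto simp: set_eq_iff)
  then have "q \<in> asymptotic_center x" unfolding asymptotic_center_def by simp
  with assms(1) show ?thesis by simp
qed

theorem lemma4p4:
  fixes T :: "'a::metric_space \<Rightarrow> 'a" and x :: "nat \<Rightarrow> 'a" and p :: 'a
  assumes "\<forall>v v' :: 'a. dist v v' < pi / 2"
    and "vicinal T"
    and "asymptotic_center x = {p}"
    and "(\<lambda>n. dist (T (x n)) (x n)) \<longlonglongrightarrow> 0"
  shows "T p = p"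
proof (rule asymptotic_center_singletonD[OF assms(3)])
  have diam: "dist u v < pi / 2" for u v :: 'a using assms(1) by blast
  have "(\<lambda>n. cos (dist (T (x n)) (x n))) \<longlonglongrightarrow> cos 0"
    by (intro tendsto_intros assms(4))
  then have "eventually (\<lambda>n. 1/2 < cos (dist (T (x n)) (x n))) sequentially"
    by (intro order_tendstoD(1)) auto
  then have "eventually (\<lambda>n. cos (dist (x n) p) - 10 * dist (T (x n)) (x n)
      \<le> cos (dist (x n) (T p))) sequentially"
    by (rule eventually_mono) (intro vicinal_cos_dist_ge[OF assms(2)] less_imp_le)
  moreover have "(\<lambda>n. 10 * dist (T (x n)) (x n)) \<longlonglongrightarrow> 0"
    using tendsto_mult_right_zero[OF assms(4)] .
  moreover have "dist (x n) (T p) \<in> {0..pi}" for n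
    using diam[of "x n" "T p"] pi_gt_zero by (simp; linarith)
  ultimately show "asymptotic_radius_at x (T p) \<le> asymptotic_radius_at x p"
    unfolding asymptotic_radius_at_def by (intro limsup_le_limsup_if_cos_ge) auto
qed

end
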